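(* Let $W$ be a layered wheel with rooted tree $T$, let $n\ge8$ be an integer and let $G$ be an $n$-vertex induced subgraph of $W$. Then either (i) there is some $u\in V(T)$ with at least $\frac n{16}$ and at most $\frac n4$ descendants in $V(G)$, such that every node $v\in V(T)$ in the same layer as $u$ has at most $\frac n4$ descendants in $V(G)$; or (ii) there is some $u\in V(T)$ and a child $u^+$ of $u$ such that the total number of descendants in $V(G)$ of all children of $u$ that lie strictly to the right of the leftmost child of $u$ and strictly to the left of $u^+$ is at least $\frac n{16}$ and at most $\frac n8$.
   Context: A layered wheel is a countably infinite graph $W$ on the same vertex set as a countably infinite, locally finite rooted tree $T$ embedded in the plane, such that: (1) for every natural number $n$, the set $L_n$ (layer) of nodes at distance $n$ from the root induces in $W$ a finite path visiting $L_n$ in the left-to-right order of the embedding (this order also orders the children of each node from left to right); edges inside layers form the set $E_L$; (2) every edge not in $E_L$ joins two nodes in ancestor–descendant relation in $T$; (3) there is a finite bound on the length of paths in $T$ consisting only of degree-$2$ nodes of $T$. A node is its own ancestor and descendant. *)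

theory Defs
  imports Complex_Main "HOL-Library.Countable_Set"
begin

text \<open>A rooted tree T on vertex set V with root r is given by a parent map par:
  every vertex reaches r by iterating par.\<close>

definition depth :: "('a \<Rightarrow> 'a) \<Rightarrow> 'a \<Rightarrow> 'a \<Rightarrow> nat" where
  "depth par r v = (LEAST k. (par ^^ k) v = r)"

definition layer :: "'a set \<Rightarrow> ('a \<Rightarrow> 'a) \<Rightarrow> 'a \<Rightarrow> nat \<Rightarrow> 'a set" where
  "layer V par r n = {v \<in> V. depth par r v = n}"

text \<open>u is an ancestor of v (every node is its own ancestor).\<close>
definition ancestor :: "('a \<Rightarrow> 'a) \<Rightarrow> 'a \<Rightarrow> 'a \<Rightarrow> 'a \<Rightarrow> bool" where
  "ancestor par r u v = (\<exists>k \<le> depth par r v. (par ^^ k) v = u)"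

definition children :: "'a set \<Rightarrow> ('a \<Rightarrow> 'a) \<Rightarrow> 'a \<Rightarrow> 'a \<Rightarrow> 'a set" where
  "children V par r u = {c \<in> V. c \<noteq> r \<and> par c = u}"

definition tadj :: "'a set \<Rightarrow> ('a \<Rightarrow> 'a) \<Rightarrow> 'a \<Rightarrow> 'a \<Rightarrow> 'a \<Rightarrow> bool" where
  "tadj V par r u v = (u \<in> V \<and> v \<in> V \<and> ((u \<noteq> r \<and> par u = v) \<or> (v \<noteq> r \<and> par v = u)))"

definition tdegree :: "'a set \<Rightarrow> ('a \<Rightarrow> 'a) \<Rightarrow> 'a \<Rightarrow> 'a \<Rightarrow> nat" where
  "tdegree V par r v = card {w. tadj V par r v w}"

definition tpath :: "'a set \<Rightarrow> ('a \<Rightarrow> 'a) \<Rightarrow> 'a \<Rightarrow> 'a list \<Rightarrow> bool" where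
  "tpath V par r p = (p \<noteq> [] \<and> distinct p \<and> set p \<subseteq> V \<and>
      (\<forall>i. Suc i < length p \<longrightarrow> tadj V par r (p ! i) (p ! Suc i)))"

text \<open>Countably infinite, locally finite rooted tree, embedded in the plane:
  the embedding is recorded by a strict left-to-right order lt which is a strict
  linear order on each layer and is compatible with the parent map (if the
  parent of x is left of the parent of y then x is left of y); restricted to the
  children of a node it is the left-to-right order of the children.\<close>
definition plane_rooted_tree ::
  "'a set \<Rightarrow> 'a \<Rightarrow> ('a \<Rightarrow> 'a) \<Rightarrow> ('a \<Rightarrow> 'a \<Rightarrow> bool) \<Rightarrow> bool" where
  "plane_rooted_tree V r par lt =
    (r \<in> V \<and> infinite V \<and> countable V \<and>
     (\<forall>v \<in> V. v \<noteq> r \<longrightarrow> par v \<in> V) \<and>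
     (\<forall>v \<in> V. \<exists>k. (par ^^ k) v = r) \<and>
     (\<forall>v \<in> V. finite (children V par r v)) \<and>
     (\<forall>n. \<forall>x \<in> layer V par r n. \<not> lt x x) \<and>
     (\<forall>n. \<forall>x \<in> layer V par r n. \<forall>y \<in> layer V par r n. \<forall>z \<in> layer V par r n.
          lt x y \<longrightarrow> lt y z \<longrightarrow> lt x z) \<and>
     (\<forall>n. \<forall>x \<in> layer V par r n. \<forall>y \<in> layer V par r n. x \<noteq> y \<longrightarrow> lt x y \<or> lt y x) \<and>
     (\<forall>n. \<forall>x \<in> layer V par r (Suc n). \<forall>y \<in> layer V par r (Suc n).
          lt (par x) (par y) \<longrightarrow> lt x y))"

definition layered_wheel ::
  "'a set \<Rightarrow> 'a \<Rightarrow> ('a \<Rightarrow> 'a) \<Rightarrow> ('a \<Rightarrow> 'a \<Rightarrow> bool) \<Rightarrow> ('a \<Rightarrow> 'a \<Rightarrow> bool) \<Rightarrow> bool" where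
  "layered_wheel V r par lt E =
    (plane_rooted_tree V r par lt \<and>
     (\<forall>u v. E u v \<longrightarrow> u \<in> V \<and> v \<in> V \<and> u \<noteq> v \<and> E v u) \<and>
     \<comment> \<open>(1) each layer induces in W the path visiting it in left-to-right order\<close>
     (\<forall>n. \<forall>u \<in> layer V par r n. \<forall>v \<in> layer V par r n.
          E u v \<longleftrightarrow>
            ((lt u v \<and> \<not> (\<exists>w \<in> layer V par r n. lt u w \<and> lt w v)) \<or>
             (lt v u \<and> \<not> (\<exists>w \<in> layer V par r n. lt v w \<and> lt w u)))) \<and>
     \<comment> \<open>(2) edges between different layers join ancestor and descendant\<close>
     (\<forall>u v. E u v \<longrightarrow> depth par r u \<noteq> depth par r v \<longrightarrow>
          ancestor par r u v \<or> ancestor par r v u) \<and>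
     \<comment> \<open>(3) bounded length of T-paths of degree-2 nodes of T\<close>
     (\<exists>B::nat. \<forall>p. tpath V par r p \<and> (\<forall>x \<in> set p. tdegree V par r x = 2)
          \<longrightarrow> length p \<le> B))"

definition ndesc :: "('a \<Rightarrow> 'a) \<Rightarrow> 'a \<Rightarrow> 'a set \<Rightarrow> 'a \<Rightarrow> nat" where
  "ndesc par r S u = card {x \<in> S. ancestor par r u x}"

end

theory Submission
  imports Defs
begin

(* Call a node heavy if more than n/4 vertices of G descend from it. The root is heavy and
   heavy nodes lie no deeper than G, so some heavy node u has no heavy node in the layer below.
   A child of u carrying at least n/16 vertices of G gives (i). Otherwise every child carries
   less than n/16, yet together they carry more than n/4 - 1 (only u itself is missing). Scan
   the children after the leftmost one from left to right: the sum over those strictly before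
   the current child grows in steps below n/16, so when it first reaches n/16 it is still below
   n/8, which gives (ii). *)

lemma prefix_sum_between:
  fixes g :: "'a \<Rightarrow> real"
  assumes fin: "finite C" and irr: "irreflp_on C lt" and tr: "transp_on C lt" and tot: "totalp_on C lt"
    and h: "0 < h" and small: "\<And>c. c \<in> C \<Longrightarrow> g c < h" and big: "2 * h \<le> (\<Sum>c\<in>C. g c)"
  shows "\<exists>w\<in>C. h \<le> (\<Sum>c\<in>{c\<in>C. lt c w}. g c) \<and> (\<Sum>c\<in>{c\<in>C. lt c w}. g c) < 2 * h"
proof -
  have asym: "asymp_on C lt" using irr tr by (simp add: asymp_on_iff_irreflp_on_if_transp_on)
  define P where "P w = (\<Sum>c\<in>{c\<in>C. lt c w}. g c)" for w
  have "C \<noteq> {}" using big h by auto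
  then obtain m where m: "m \<in> C" "\<forall>x\<in>C. x \<noteq> m \<longrightarrow> lt x m"
    using Finite_Set.bex_greatest_element[OF fin _ tr tot] by blast
  have "P m = (\<Sum>c\<in>C. g c) - g m"
  proof -
    have "{c\<in>C. lt c m} = C - {m}" using m irr by (auto dest: irreflp_onD)
    thus ?thesis unfolding P_def by (simp add: sum_diff1 fin m(1))
  qed
  with small[OF m(1)] big have "h \<le> P m" by linarith
  then obtain w where w: "w \<in> C" "h \<le> P w"
    and w_least: "\<And>x. x \<in> C \<Longrightarrow> lt x w \<Longrightarrow> \<not> h \<le> P x"
    using Finite_Set.bex_min_element_with_property[OF fin _ tr, of "\<lambda>x. h \<le> P x"] m(1) asym
    by blast
  define B where "B = {c\<in>C. lt c w}"
  have "B \<noteq> {}" using w(2) h unfolding P_def B_def[symmetric] by auto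
  then obtain p where p: "p \<in> B" "\<forall>x\<in>B. x \<noteq> p \<longrightarrow> lt x p"
  proof -
    have "B \<subseteq> C" unfolding B_def by blast
    then show ?thesis using that Finite_Set.bex_greatest_element[of B lt] \<open>B \<noteq> {}\<close>
        finite_subset[OF _ fin] transp_on_subset[OF tr] totalp_on_subset[OF tot] by blast
  qed
  have pC: "p \<in> C" "lt p w" using p(1) unfolding B_def by auto
  have "{c\<in>C. lt c p} = B - {p}"
    using p pC w(1) irr tr unfolding B_def by (auto dest: irreflp_onD transp_onD)
  hence "P w = P p + g p"
    unfolding P_def B_def[symmetric] using fin p(1) by (simp add: B_def sum_diff1)
  moreover have "P p < h" using w_least[OF pC] by simp
  ultimately show ?thesis using w small[OF pC(1)] unfolding P_def by force
qed

lemma interval_sum_between: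
  fixes g :: "'a \<Rightarrow> real"
  assumes fin: "finite C" and irr: "irreflp_on C lt" and tr: "transp_on C lt" and tot: "totalp_on C lt"
    and h: "0 < h" and small: "\<And>c. c \<in> C \<Longrightarrow> g c < h" and big: "3 * h \<le> (\<Sum>c\<in>C. g c)"
  shows "\<exists>c0\<in>C. \<exists>w\<in>C. (\<forall>c\<in>C. c \<noteq> c0 \<longrightarrow> lt c0 c) \<and>
           h \<le> (\<Sum>c\<in>{c\<in>C. lt c0 c \<and> lt c w}. g c) \<and> (\<Sum>c\<in>{c\<in>C. lt c0 c \<and> lt c w}. g c) < 2 * h"
proof -
  have "C \<noteq> {}" using big h by auto
  then obtain c0 where c0: "c0 \<in> C" "\<forall>c\<in>C. c \<noteq> c0 \<longrightarrow> lt c0 c"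
    using Finite_Set.bex_least_element[OF fin _ tr tot] by blast
  define C' where "C' = {c\<in>C. lt c0 c}"
  have C': "C' = C - {c0}" using c0 irr unfolding C'_def by (auto dest: irreflp_onD)
  have "(\<Sum>c\<in>C'. g c) = (\<Sum>c\<in>C. g c) - g c0" unfolding C' by (simp add: sum_diff1 fin c0(1))
  with small[OF c0(1)] big have "2 * h \<le> (\<Sum>c\<in>C'. g c)" by linarith
  moreover have "C' \<subseteq> C" unfolding C'_def by blast
  then have "finite C'" "irreflp_on C' lt" "transp_on C' lt" "totalp_on C' lt"
    using fin irr tr tot by (auto intro: finite_subset irreflp_on_subset transp_on_subset totalp_on_subset)
  ultimately obtain w where w: "w \<in> C'"
    and "h \<le> (\<Sum>c\<in>{c\<in>C'. lt c w}. g c)" "(\<Sum>c\<in>{c\<in>C'. lt c w}. g c) < 2 * h"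
    using prefix_sum_between[of C' lt h g] small h \<open>C' \<subseteq> C\<close> by blast
  moreover have "{c\<in>C'. lt c w} = {c\<in>C. lt c0 c \<and> lt c w}" unfolding C'_def by blast
  moreover have "w \<in> C" using w \<open>C' \<subseteq> C\<close> by blast
  ultimately show ?thesis using c0 by auto
qed

locale rooted_tree =
  fixes V :: "'a set" and r :: 'a and par :: "'a \<Rightarrow> 'a"
  assumes root_in: "r \<in> V"
    and par_in: "\<And>v. v \<in> V \<Longrightarrow> v \<noteq> r \<Longrightarrow> par v \<in> V"
    and reaches_root: "\<And>v. v \<in> V \<Longrightarrow> \<exists>k. (par ^^ k) v = r"
begin

lemma funpow_depth:
  assumes "v \<in> V"
  shows "(par ^^ depth par r v) v = r"
proof -
  obtain k where "(par ^^ k) v = r" using reaches_root[OF assms] ..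
  then show ?thesis unfolding depth_def by (rule LeastI)
qed

lemma depth_le: "(par ^^ k) v = r \<Longrightarrow> depth par r v \<le> k"
  unfolding depth_def by (rule Least_le)

lemma depth_root [simp]: "depth par r r = 0"
  using depth_le[of 0 r] by simp

lemma depth_par:
  assumes "v \<in> V" "v \<noteq> r"
  shows "depth par r v = Suc (depth par r (par v))"
proof (rule antisym)
  have "(par ^^ Suc (depth par r (par v))) v = r"
    using funpow_depth[OF par_in[OF assms]] by (simp only: funpow_Suc_right comp_def)
  thus "depth par r v \<le> Suc (depth par r (par v))" by (rule depth_le)
  have "depth par r v \<noteq> 0" using funpow_depth[OF assms(1)] assms(2) by (metis funpow_0)
  then obtain d where d: "depth par r v = Suc d" using not0_implies_Suc by blast
  hence "(par ^^ d) (par v) = r" using funpow_depth[OF assms(1)] by (simp only: funpow_Suc_right comp_def)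
  thus "Suc (depth par r (par v)) \<le> depth par r v" using d depth_le by simp
qed

lemma funpow_par_depth:
  assumes "v \<in> V" "k \<le> depth par r v"
  shows "(par ^^ k) v \<in> V \<and> depth par r ((par ^^ k) v) = depth par r v - k"
  using assms(2)
proof (induction k)
  case (Suc k)
  then have IH: "(par ^^ k) v \<in> V" "depth par r ((par ^^ k) v) = depth par r v - k" by auto
  moreover have "depth par r ((par ^^ k) v) \<noteq> 0" using IH(2) Suc.prems by simp
  then have "(par ^^ k) v \<noteq> r" by (metis depth_root)
  ultimately show ?case using depth_par[of "(par ^^ k) v"] par_in[of "(par ^^ k) v"] by simp
qed (use assms(1) in simp)

lemma ancestor_root: "v \<in> V \<Longrightarrow> ancestor par r r v"
  unfolding ancestor_def using funpow_depth by blast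

lemma ancestor_depth_le:
  assumes "v \<in> V" "ancestor par r u v"
  shows "depth par r u \<le> depth par r v"
  using assms funpow_par_depth unfolding ancestor_def by fastforce

lemma children_depth:
  assumes "c \<in> children V par r u"
  shows "depth par r c = Suc (depth par r u)"
proof -
  have "c \<in> V" "c \<noteq> r" "par c = u" using assms unfolding children_def by auto
  then show ?thesis using depth_par by metis
qed

lemma ancestor_via_child:
  assumes "v \<in> V" "ancestor par r u v" "v \<noteq> u"
  shows "\<exists>c\<in>children V par r u. ancestor par r c v"
proof -
  obtain k where k: "k \<le> depth par r v" "(par ^^ k) v = u"
    using assms(2) unfolding ancestor_def by blast
  with assms(3) obtain j where j: "k = Suc j" by (cases k) auto
  let ?c = "(par ^^ j) v"
  have "?c \<in> V" "depth par r ?c = depth par r v - j" using funpow_par_depth[OF assms(1)] k j by auto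
  moreover have "par ?c = u" using k(2) j by simp
  moreover have "?c \<noteq> r" using calculation(2) k j depth_root by (metis Suc_le_eq zero_less_diff less_irrefl)
  ultimately have "?c \<in> children V par r u" unfolding children_def by blast
  moreover have "ancestor par r ?c v" unfolding ancestor_def using k j by (intro exI[of _ j]) auto
  ultimately show ?thesis by blast
qed

lemma children_subset_layer:
  "children V par r u \<subseteq> layer V par r (Suc (depth par r u))"
  unfolding layer_def using children_depth by (auto simp: children_def)

lemma ndesc_root:
  assumes "S \<subseteq> V"
  shows "ndesc par r S r = card S"
proof -
  have "{x\<in>S. ancestor par r r x} = S" using ancestor_root assms by blast
  then show ?thesis unfolding ndesc_def by simp
qed

lemma ndesc_le_children_sum:
  assumes "S \<subseteq> V" "finite S" "finite (children V par r u)"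
  shows "ndesc par r S u \<le> 1 + (\<Sum>c\<in>children V par r u. ndesc par r S c)"
proof -
  let ?D = "\<lambda>w. {x\<in>S. ancestor par r w x}"
  have "?D u \<subseteq> {u} \<union> (\<Union>c\<in>children V par r u. ?D c)"
    using ancestor_via_child assms(1) by blast
  then have "card (?D u) \<le> card ({u} \<union> (\<Union>c\<in>children V par r u. ?D c))"
    by (rule card_mono[rotated]) (use assms(2,3) in auto)
  also have "\<dots> \<le> 1 + card (\<Union>c\<in>children V par r u. ?D c)"
    using card_Un_le[of "{u}"] by simp
  also have "\<dots> \<le> 1 + (\<Sum>c\<in>children V par r u. card (?D c))"
    using card_UN_le[OF assms(3)] by simp
  finally show ?thesis unfolding ndesc_def .
qed

lemma ndesc_pos_depth_le:
  assumes "S \<subseteq> V" "finite S" "0 < ndesc par r S v"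
  shows "depth par r v \<le> Max (depth par r ` S)"
proof -
  obtain x where "x \<in> S" "ancestor par r v x"
    using assms(3) unfolding ndesc_def by (metis (no_types, lifting) card.empty empty_Collect_eq less_irrefl)
  then have "depth par r v \<le> depth par r x" using ancestor_depth_le assms(1) by blast
  also have "\<dots> \<le> Max (depth par r ` S)" using \<open>x \<in> S\<close> assms(2) by simp
  finally show ?thesis .
qed

lemma ex_deepest_heavy:
  assumes "S \<subseteq> V" "finite S" "0 \<le> t" "t < real (card S)"
  shows "\<exists>u\<in>V. t < real (ndesc par r S u) \<and>
           (\<forall>v\<in>V. depth par r v = Suc (depth par r u) \<longrightarrow> real (ndesc par r S v) \<le> t)"
proof -
  let ?heavy = "\<lambda>v. v \<in> V \<and> t < real (ndesc par r S v)"
  have "?heavy r" using root_in ndesc_root[OF assms(1)] assms(4) by simp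
  moreover have "depth par r v \<le> Max (depth par r ` S)" if "?heavy v" for v
    using that ndesc_pos_depth_le[OF assms(1,2)] assms(3) by simp
  ultimately obtain u where "?heavy u" and deepest: "\<forall>v. ?heavy v \<longrightarrow> depth par r v \<le> depth par r u"
    using Lattices_Big.ex_has_greatest_nat[of ?heavy r "depth par r" "Suc (Max (depth par r ` S))"]
    by (meson le_imp_less_Suc)
  moreover have "real (ndesc par r S v) \<le> t" if "v \<in> V" "depth par r v = Suc (depth par r u)" for v
    using deepest that by fastforce
  ultimately show ?thesis by blast
qed

end

lemma plane_rooted_tree_rooted_tree:
  assumes "plane_rooted_tree V r par lt"
  shows "rooted_tree V r par"
proof -
  have "r \<in> V" "\<forall>v\<in>V. v \<noteq> r \<longrightarrow> par v \<in> V" "\<forall>v\<in>V. \<exists>k. (par ^^ k) v = r"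
    using assms unfolding plane_rooted_tree_def by blast+
  then show ?thesis by unfold_locales blast+
qed

lemma plane_rooted_tree_layer_order:
  assumes "plane_rooted_tree V r par lt"
  shows "irreflp_on (layer V par r m) lt" "transp_on (layer V par r m) lt"
    "totalp_on (layer V par r m) lt"
proof -
  have "\<forall>x \<in> layer V par r m. \<not> lt x x"
    and "\<forall>x \<in> layer V par r m. \<forall>y \<in> layer V par r m. \<forall>z \<in> layer V par r m.
           lt x y \<longrightarrow> lt y z \<longrightarrow> lt x z"
    and "\<forall>x \<in> layer V par r m. \<forall>y \<in> layer V par r m. x \<noteq> y \<longrightarrow> lt x y \<or> lt y x"
    using assms unfolding plane_rooted_tree_def by blast+
  then show "irreflp_on (layer V par r m) lt" "transp_on (layer V par r m) lt"
    "totalp_on (layer V par r m) lt"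
    unfolding irreflp_on_def transp_on_def totalp_on_def by blast+
qed

lemma light_children_interval_sum:
  fixes n :: nat
  assumes plane: "plane_rooted_tree V r par lt" and S: "S \<subseteq> V" "finite S" and u: "u \<in> V"
    and "4 \<le> n" and heavy: "real n / 4 < real (ndesc par r S u)"
    and light: "\<And>c. c \<in> children V par r u \<Longrightarrow> real (ndesc par r S c) < real n / 16"
  shows "\<exists>c0 \<in> children V par r u. \<exists>w \<in> children V par r u.
           (\<forall>c \<in> children V par r u. c \<noteq> c0 \<longrightarrow> lt c0 c) \<and>
           real n / 16 \<le> real (\<Sum>c \<in> {c \<in> children V par r u. lt c0 c \<and> lt c w}. ndesc par r S c) \<and>
           real (\<Sum>c \<in> {c \<in> children V par r u. lt c0 c \<and> lt c w}. ndesc par r S c) \<le> real n / 8"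
proof -
  interpret rooted_tree V r par using plane by (rule plane_rooted_tree_rooted_tree)
  let ?f = "\<lambda>v. real (ndesc par r S v)"
  let ?C = "children V par r u"
  have fin_C: "finite ?C" using plane u unfolding plane_rooted_tree_def by blast
  have "?f u \<le> 1 + (\<Sum>c\<in>?C. ?f c)"
    using ndesc_le_children_sum[OF S fin_C] unfolding of_nat_sum[symmetric] by linarith
  with heavy have heavy_sum: "real n / 4 < 1 + (\<Sum>c\<in>?C. ?f c)" by linarith
  have "16 \<le> n"
  proof (rule ccontr)
    assume "\<not> 16 \<le> n"
    then have "\<And>c. c \<in> ?C \<Longrightarrow> ?f c = 0" using light by fastforce
    then show False using heavy_sum \<open>4 \<le> n\<close> by simp
  qed
  with heavy_sum have "3 * (real n / 16) \<le> (\<Sum>c\<in>?C. ?f c)" by linarith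
  moreover have "irreflp_on ?C lt" "transp_on ?C lt" "totalp_on ?C lt"
    using plane_rooted_tree_layer_order[OF plane] children_subset_layer[of u]
    by (blast intro: irreflp_on_subset transp_on_subset totalp_on_subset)+
  ultimately obtain c0 w where c0: "c0 \<in> ?C" "\<forall>c\<in>?C. c \<noteq> c0 \<longrightarrow> lt c0 c" and "w \<in> ?C"
    and "real n / 16 \<le> (\<Sum>c\<in>{c\<in>?C. lt c0 c \<and> lt c w}. ?f c)"
    and "(\<Sum>c\<in>{c\<in>?C. lt c0 c \<and> lt c w}. ?f c) < 2 * (real n / 16)"
    using interval_sum_between[OF fin_C _ _ _ _ light] \<open>16 \<le> n\<close> by force
  then have "real n / 16 \<le> real (\<Sum>c\<in>{c\<in>?C. lt c0 c \<and> lt c w}. ndesc par r S c)"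
    and "real (\<Sum>c\<in>{c\<in>?C. lt c0 c \<and> lt c w}. ndesc par r S c) \<le> real n / 8"
    unfolding of_nat_sum by linarith+
  then show ?thesis using c0 \<open>w \<in> ?C\<close> by blast
qed

theorem lemma5p1:
  fixes V :: "'a set" and r :: 'a and par :: "'a \<Rightarrow> 'a"
    and lt :: "'a \<Rightarrow> 'a \<Rightarrow> bool" and E :: "'a \<Rightarrow> 'a \<Rightarrow> bool"
    and S :: "'a set" and n :: nat
  assumes "layered_wheel V r par lt E"
    and "n \<ge> 8"
    and "S \<subseteq> V" and "finite S" and "card S = n"
  shows "(\<exists>u \<in> V. real n / 16 \<le> real (ndesc par r S u) \<and> real (ndesc par r S u) \<le> real n / 4 \<and>
            (\<forall>v \<in> V. depth par r v = depth par r u \<longrightarrow> real (ndesc par r S v) \<le> real n / 4))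
       \<or> (\<exists>u \<in> V. \<exists>c0 \<in> children V par r u. \<exists>up \<in> children V par r u.
            (\<forall>c \<in> children V par r u. c \<noteq> c0 \<longrightarrow> lt c0 c) \<and>
            real n / 16 \<le> real (\<Sum>c \<in> {c \<in> children V par r u. lt c0 c \<and> lt c up}. ndesc par r S c) \<and>
            real (\<Sum>c \<in> {c \<in> children V par r u. lt c0 c \<and> lt c up}. ndesc par r S c) \<le> real n / 8)"
proof -
  have plane: "plane_rooted_tree V r par lt" using assms(1) unfolding layered_wheel_def by blast
  interpret rooted_tree V r par using plane by (rule plane_rooted_tree_rooted_tree)
  obtain u where u: "u \<in> V" "real n / 4 < real (ndesc par r S u)"
    and light_below: "\<And>v. v \<in> V \<Longrightarrow> depth par r v = Suc (depth par r u) \<Longrightarrow>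
                              real (ndesc par r S v) \<le> real n / 4"
    using ex_deepest_heavy[OF assms(3,4), of "real n / 4"] assms(2,5) by auto
  show ?thesis
  proof (cases "\<exists>c \<in> children V par r u. real n / 16 \<le> real (ndesc par r S c)")
    case True
    then obtain c where c: "c \<in> children V par r u" "real n / 16 \<le> real (ndesc par r S c)" by blast
    have "c \<in> V" using c(1) unfolding children_def by blast
    moreover have "depth par r c = Suc (depth par r u)" using children_depth[OF c(1)] .
    ultimately show ?thesis using c(2) light_below by (intro disjI1 bexI[of _ c]) auto
  next
    case False
    then have light: "\<And>c. c \<in> children V par r u \<Longrightarrow> real (ndesc par r S c) < real n / 16"
      by auto
    have "4 \<le> n" using assms(2) by simp
    from light_children_interval_sum[OF plane assms(3,4) u(1) this u(2) light]
    show ?thesis using u(1) by blast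
  qed
qed

end
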